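(* Let $d_1\le\dots\le d_n$ be a \textsc{2-Visits} instance with discretized sequence $A$, and let $\langle a_i,\dots,a_j\rangle$ be a cluster of $A$. In any feasible schedule in which all secondary visits are placed in gaps and the secondary visits appear in order of non-decreasing induced deadlines, the primary visits of nodes $i,\dots,j$ occupy exactly the positions $a_i,\dots,a_j$ (in some order).
   Context: \textsc{2-Visits} (primary/secondary formulation): given non-decreasing positive integers $d_1\le\dots\le d_n$, a feasible schedule is a schedule of length $2n$ (each position $1,\dots,2n$ holds one visit) containing one primary and one secondary visit of each node $i\in[n]$, such that the primary visit of $i$ is at position at most $d_i$, and the secondary visit of $i$ is either before its primary visit or at most $d_i$ positions after its primary visit. The discretized sequence $A=\langle a_1,\dots,a_n\rangle$ is defined by $a_n=d_n$ and $a_i=\min\{a_{i+1}-1,d_i\}$ for $i<n$; a gap is a position $p\in[2n]$ with $p\notin A$. A cluster is a maximal contiguous subsequence $\langle a_p,\dots,a_q\rangle$ of $A$ consisting of consecutive integers. If the primary visit of node $i$ is at position $t_i$, its induced deadline is $d_i+t_i$. Standing assumptions: all entries of $A$ are positive and all $d_i\le 2n$. *)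

theory Defs
  imports Main
begin

function disc :: "(nat \<Rightarrow> nat) \<Rightarrow> nat \<Rightarrow> nat \<Rightarrow> nat" where
  "disc d n i = (if n \<le> i then d n else min (disc d n (i + 1) - 1) (d i))"
  by auto
termination by (relation "measure (\<lambda>(d, n, i). n - i)") auto

declare disc.simps [simp del]

definition instance2 :: "nat \<Rightarrow> (nat \<Rightarrow> nat) \<Rightarrow> bool" where
  "instance2 n d \<longleftrightarrow>
     (\<forall>i\<in>{1..n}. 0 < d i \<and> d i \<le> 2 * n) \<and>
     (\<forall>i\<in>{1..n}. \<forall>j\<in>{1..n}. i \<le> j \<longrightarrow> d i \<le> d j)"

text \<open>Feasible schedule: t i = position of the primary visit of node i,
  s i = position of the secondary visit; the 2n visits occupy the 2n positions
  1..2n bijectively.\<close>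
definition feasible :: "nat \<Rightarrow> (nat \<Rightarrow> nat) \<Rightarrow> (nat \<Rightarrow> nat) \<Rightarrow> (nat \<Rightarrow> nat) \<Rightarrow> bool" where
  "feasible n d t s \<longleftrightarrow>
     bij_betw (\<lambda>(i, prim). if prim then t i else s i) ({1..n} \<times> (UNIV :: bool set)) {1..2 * n} \<and>
     (\<forall>i\<in>{1..n}. t i \<le> d i \<and> (s i < t i \<or> s i \<le> t i + d i))"

definition is_gap :: "nat \<Rightarrow> (nat \<Rightarrow> nat) \<Rightarrow> nat \<Rightarrow> bool" where
  "is_gap n d p \<longleftrightarrow> p \<in> {1..2 * n} \<and> p \<notin> disc d n ` {1..n}"

definition is_cluster :: "nat \<Rightarrow> (nat \<Rightarrow> nat) \<Rightarrow> nat \<Rightarrow> nat \<Rightarrow> bool" where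
  "is_cluster n d p q \<longleftrightarrow>
     1 \<le> p \<and> p \<le> q \<and> q \<le> n \<and>
     (\<forall>k. p \<le> k \<and> k < q \<longrightarrow> disc d n (k + 1) = disc d n k + 1) \<and>
     (p = 1 \<or> disc d n p \<noteq> disc d n (p - 1) + 1) \<and>
     (q = n \<or> disc d n (q + 1) \<noteq> disc d n q + 1)"

end

theory Submission
  imports Defs
begin

text \<open>Secondary visits in gaps fill all \<open>n\<close> gaps, so the primary visits occupy exactly
  the positions of \<open>A\<close>. If \<open>a\<^sub>m = d\<^sub>m\<close>, the primary visits of nodes \<open>1, \<dots>, m\<close> lie at
  positions \<open>\<le> d\<^sub>m = a\<^sub>m\<close>, hence among \<open>a\<^sub>1, \<dots>, a\<^sub>m\<close>, and by counting they fill them.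
  A cluster \<open>\<langle>a\<^sub>i, \<dots>, a\<^sub>j\<rangle>\<close> is delimited by such tight indices \<open>j\<close> and \<open>i - 1\<close>, and the
  primary visits of \<open>i, \<dots>, j\<close> fill the difference of the two prefixes.\<close>

lemma disc_last: "disc d n n = d n"
  by (subst disc.simps) simp

lemma disc_below_last: "k < n \<Longrightarrow> disc d n k = min (disc d n (Suc k) - 1) (d k)"
  by (subst disc.simps) simp

lemma disc_less_Suc:
  assumes "k < n" "0 < disc d n (Suc k)"
  shows "disc d n k < disc d n (Suc k)"
  using assms by (simp add: disc_below_last)

lemma disc_eq_if_not_consecutive:
  assumes "k < n" "0 < disc d n (Suc k)" "disc d n (Suc k) \<noteq> disc d n k + 1"
  shows "disc d n k = d k"
  using assms by (auto simp: disc_below_last min_def)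

lemma disc_strict_mono_on:
  assumes "\<forall>k\<in>{1..n}. 0 < disc d n k"
  shows "strict_mono_on {1..n} (disc d n)"
proof (rule strict_mono_onI)
  fix k l :: nat
  assume "k \<in> {1..n}" "l \<in> {1..n}" "k < l"
  show "disc d n k < disc d n l"
  proof (rule lift_Suc_mono_less_ivl[where f = "disc d n" and N = "{1..<n}"])
    fix m assume "m \<in> {1..<n}"
    then show "disc d n m < disc d n (Suc m)"
      using assms by (intro disc_less_Suc) auto
  qed (use \<open>k \<in> {1..n}\<close> \<open>l \<in> {1..n}\<close> \<open>k < l\<close> in auto)
qed

lemma disc_image_subset:
  assumes "instance2 n d" "\<forall>k\<in>{1..n}. 0 < disc d n k"
  shows "disc d n ` {1..n} \<subseteq> {1..2 * n}"
proof
  fix p assume "p \<in> disc d n ` {1..n}"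
  then obtain k where k: "k \<in> {1..n}" "p = disc d n k" by blast
  have "disc d n k \<le> disc d n n"
    using strict_mono_on_leD[OF disc_strict_mono_on[OF assms(2)]] k by auto
  also have "\<dots> \<le> 2 * n"
    using assms(1) k by (auto simp: disc_last instance2_def)
  finally have "disc d n k \<le> 2 * n" .
  moreover have "0 < disc d n k" using assms(2) k by blast
  ultimately show "p \<in> {1..2 * n}" using k by simp
qed

lemma feasible_inj_on_visit:
  assumes "feasible n d t s"
  shows "inj_on (\<lambda>k. if prim then t k else s k) {1..n}"
proof (rule inj_onI)
  fix k l assume "k \<in> {1..n}" "l \<in> {1..n}"
    and "(if prim then t k else s k) = (if prim then t l else s l)"
  then show "k = l"
    using assms unfolding feasible_def bij_betw_def
    by (auto dest: inj_onD[where x = "(k, prim)" and y = "(l, prim)"])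
qed

lemma feasible_inj_on_primary: "feasible n d t s \<Longrightarrow> inj_on t {1..n}"
  using feasible_inj_on_visit[where prim = True] by simp

lemma feasible_inj_on_secondary: "feasible n d t s \<Longrightarrow> inj_on s {1..n}"
  using feasible_inj_on_visit[where prim = False] by simp

lemma feasible_primary_eq_complement:
  assumes "feasible n d t s"
  shows "t ` {1..n} = {1..2 * n} - s ` {1..n}"
proof -
  define f where "f = (\<lambda>(k, prim). if prim then t k else s k)"
  have bij: "bij_betw f ({1..n} \<times> UNIV) {1..2 * n}"
    using assms unfolding f_def by (simp add: feasible_def)
  have "{1..n} \<times> UNIV = (\<lambda>k. (k, True)) ` {1..n} \<union> (\<lambda>k. (k, False)) ` {1..n}"
    by (auto simp: UNIV_bool)
  then have "f ` ({1..n} \<times> UNIV) = t ` {1..n} \<union> s ` {1..n}"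
    by (simp add: f_def image_Un image_image)
  then have cover: "t ` {1..n} \<union> s ` {1..n} = {1..2 * n}"
    using bij_betw_imp_surj_on[OF bij] by simp
  have "t ` {1..n} \<inter> s ` {1..n} = {}"
  proof (rule ccontr)
    assume "t ` {1..n} \<inter> s ` {1..n} \<noteq> {}"
    then obtain k l where kl: "k \<in> {1..n}" "l \<in> {1..n}" "t k = s l"
      by blast
    then have "f (k, True) = f (l, False)"
      by (simp add: f_def)
    then have "(k, True) = (l, False)"
      by (rule inj_onD[OF bij_betw_imp_inj_on[OF bij]]) (use kl in auto)
    then show False by simp
  qed
  with cover show ?thesis
    by blast
qed

lemma primary_positions_eq_disc:
  assumes "instance2 n d" "\<forall>k\<in>{1..n}. 0 < disc d n k" "feasible n d t s"
    and "\<forall>k\<in>{1..n}. is_gap n d (s k)"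
  shows "t ` {1..n} = disc d n ` {1..n}"
proof -
  let ?A = "disc d n ` {1..n}"
  have A_sub: "?A \<subseteq> {1..2 * n}"
    using disc_image_subset[OF assms(1,2)] .
  have "s ` {1..n} \<subseteq> {1..2 * n} - ?A"
    using assms(4) unfolding is_gap_def by auto
  moreover have "card (s ` {1..n}) = n"
    using card_image[OF feasible_inj_on_secondary[OF assms(3)]] by simp
  moreover have "card ({1..2 * n} - ?A) = n"
    using card_Diff_subset[OF _ A_sub]
      card_image[OF strict_mono_on_imp_inj_on[OF disc_strict_mono_on[OF assms(2)]]]
    by simp
  ultimately have "s ` {1..n} = {1..2 * n} - ?A"
    by (intro card_subset_eq) auto
  then show ?thesis
    using feasible_primary_eq_complement[OF assms(3)] A_sub by auto
qed

lemma image_initial_segment_eq_if_tight: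
  fixes t a d :: "nat \<Rightarrow> 'a::linorder"
  assumes "t ` {1..n} = a ` {1..n}" "inj_on t {1..n}" "strict_mono_on {1..n} a"
    and "\<forall>k\<in>{1..n}. t k \<le> d k" "mono_on {1..n} d"
    and "m \<le> n" "a m = d m"
  shows "t ` {1..m} = a ` {1..m}"
proof (rule card_subset_eq)
  show "t ` {1..m} \<subseteq> a ` {1..m}"
  proof
    fix p assume "p \<in> t ` {1..m}"
    then obtain k where k: "k \<in> {1..m}" "p = t k" by blast
    then obtain l where l: "l \<in> {1..n}" "t k = a l"
      using assms(1,6) by (metis atLeastAtMost_iff imageE imageI le_trans)
    have "a l \<le> d m"
      using l k assms(4,6) mono_onD[OF assms(5), of k m] by (metis atLeastAtMost_iff order.trans)
    then have "l \<le> m"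
      using strict_mono_on_less_eq[OF assms(3), of l m] l k assms(6,7) by auto
    with k l show "p \<in> a ` {1..m}" by auto
  qed
  show "card (t ` {1..m}) = card (a ` {1..m})"
    using card_image[OF inj_on_subset[OF assms(2)]]
      card_image[OF inj_on_subset[OF strict_mono_on_imp_inj_on[OF assms(3)]]] assms(6)
    by auto
qed simp

lemma cluster_bounds_tight:
  assumes "\<forall>k\<in>{1..n}. 0 < disc d n k" "is_cluster n d i j"
  shows "disc d n j = d j" "1 < i \<Longrightarrow> disc d n (i - 1) = d (i - 1)"
proof -
  have ij: "1 \<le> i" "i \<le> j" "j \<le> n"
    and left: "i = 1 \<or> disc d n i \<noteq> disc d n (i - 1) + 1"
    and right: "j = n \<or> disc d n (j + 1) \<noteq> disc d n j + 1"
    using assms(2) unfolding is_cluster_def by auto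
  show "disc d n j = d j"
  proof (cases "j = n")
    case True
    then show ?thesis by (simp add: disc_last)
  next
    case False
    with ij right assms(1) show ?thesis
      by (intro disc_eq_if_not_consecutive) auto
  qed
  show "disc d n (i - 1) = d (i - 1)" if "1 < i"
  proof -
    have "Suc (i - 1) = i" using that by simp
    with that ij left assms(1) show ?thesis
      using disc_eq_if_not_consecutive[of "i - 1" n d] by auto
  qed
qed

theorem lemma6:
  fixes n :: nat and d t s :: "nat \<Rightarrow> nat" and i j :: nat
  assumes "instance2 n d"
    and "\<forall>k\<in>{1..n}. 0 < disc d n k"
    and "is_cluster n d i j"
    and "feasible n d t s"
    and "\<forall>k\<in>{1..n}. is_gap n d (s k)"
    and "\<forall>k\<in>{1..n}. \<forall>l\<in>{1..n}. s k < s l \<longrightarrow> d k + t k \<le> d l + t l"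
  shows "t ` {i..j} = disc d n ` {i..j}"
proof -
  have ij: "1 \<le> i" "i \<le> j" "j \<le> n"
    using assms(3) unfolding is_cluster_def by auto
  have inj_t: "inj_on t {1..n}"
    using feasible_inj_on_primary[OF assms(4)] .
  have inj_a: "inj_on (disc d n) {1..n}"
    using strict_mono_on_imp_inj_on[OF disc_strict_mono_on[OF assms(2)]] .
  have t_le_d: "\<forall>k\<in>{1..n}. t k \<le> d k"
    using assms(4) unfolding feasible_def by blast
  have d_mono: "mono_on {1..n} d"
    using assms(1) unfolding instance2_def by (auto intro: mono_onI)
  have prefix: "t ` {1..m} = disc d n ` {1..m}" if "m \<le> n" "disc d n m = d m" for m
    using image_initial_segment_eq_if_tight[OF primary_positions_eq_disc[OF assms(1,2,4,5)]
        inj_t disc_strict_mono_on[OF assms(2)] t_le_d d_mono that] .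
  have ivl: "{i..j} = {1..j} - {1..i - 1}"
    using ij by auto
  have "t ` {i..j} = t ` {1..j} - t ` {1..i - 1}"
    unfolding ivl by (rule inj_on_image_set_diff[OF inj_t]) (use ij in auto)
  also have "\<dots> = disc d n ` {1..j} - disc d n ` {1..i - 1}"
    using prefix cluster_bounds_tight[OF assms(2,3)] ij by (cases "i = 1") auto
  also have "\<dots> = disc d n ` {i..j}"
    unfolding ivl by (rule inj_on_image_set_diff[OF inj_a, symmetric]) (use ij in auto)
  finally show ?thesis .
qed

end
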